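(* Let $\alpha\ge6$ and $f_\alpha(y)=\sum_{k,l\in\mathbb{Z}}e^{-\pi\alpha\phi_{k,l}(y)}$. Then $f_\alpha''(y)<0$ for all $y\in\big[\tfrac{\sqrt3}2,\tfrac{\sqrt3}2+\tfrac1{3\sqrt\alpha}\big]$.
   Context: For $y>0$ and $(k,l)\in\mathbb{Z}^2$: $\phi_{k,l}(y)=\frac{(2k+l+1)^2}{4y}+y\big(l+\frac12-\frac1{8y^2}\big)^2$. *)

theory Defs
  imports "HOL-Analysis.Analysis"
begin

definition phi :: "int \<Rightarrow> int \<Rightarrow> real \<Rightarrow> real" where
  "phi k l y = (of_int (2*k + l + 1))^2 / (4*y) + y * (of_int l + 1/2 - 1/(8*y^2))^2"

definition f_alpha :: "real \<Rightarrow> real \<Rightarrow> real" where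
  "f_alpha \<alpha> y = (\<Sum>\<^sub>\<infinity>(k,l)\<in>(UNIV :: (int \<times> int) set). exp (- pi * \<alpha> * phi k l y))"

end

(* With t = pi * alpha, f_alpha is a sum of Gaussians exp (- t * phi k l y) which, together with
   their first two y-derivatives, are dominated on 4/5 < y < 11/10 by summable geometric weights,
   so f_alpha'' = sum (t^2 phi'^2 - t phi'') exp (- t phi) may be computed termwise.
   For y >= sqrt 3 / 2 the excess phi k l - phi 0 0 is at least quad k l / y, where
   quad k l = k^2 + k l + l^2 + k + l vanishes exactly at (0,0), (-1,0), (0,-1); these three
   indices give identical terms. There phi'' >= 0.42, while phi' vanishes at y = sqrt 3 / 2, so
   t phi'^2 <= 0.21 on the window t (y - sqrt 3 / 2)^2 <= pi / 9 and each of the three terms is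
   at most -0.21 t exp (- t phi 0 0). All remaining terms together contribute at most
   10 t^2 exp (- t phi 0 0) exp (- 15 t / 32) * 25 / 9, which is smaller once t >= 6 pi. *)

theory Submission
  imports Defs
begin

lemma has_sum_power_abs_int:
  fixes r :: real
  assumes "0 \<le> r" "r < 1"
  shows "((\<lambda>k::int. r ^ nat \<bar>k\<bar>) has_sum ((1 + r) / (1 - r))) UNIV"
proof -
  have geom: "((\<lambda>n::nat. r ^ n) has_sum (1 / (1 - r))) UNIV"
    using assms by (intro sums_nonneg_imp_has_sum) (auto intro: geometric_sums)
  have nonneg: "((\<lambda>k::int. r ^ nat \<bar>k\<bar>) has_sum (1 / (1 - r))) (range int)"
    by (subst has_sum_reindex) (use geom in \<open>auto simp: o_def inj_def\<close>)
  have neg: "((\<lambda>k::int. r ^ nat \<bar>k\<bar>) has_sum (r * (1 / (1 - r)))) (range (\<lambda>n::nat. - int n - 1))"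
  proof (subst has_sum_reindex)
    show "inj (\<lambda>n::nat. - int n - 1)" by (simp add: inj_def)
    have "nat \<bar>- int n - 1\<bar> = Suc n" for n :: nat by simp
    then show "((\<lambda>k::int. r ^ nat \<bar>k\<bar>) \<circ> (\<lambda>n::nat. - int n - 1) has_sum (r * (1 / (1 - r)))) UNIV"
      using has_sum_cmult_right[OF geom, of r] by (simp add: o_def)
  qed
  have "k \<in> range int \<union> range (\<lambda>n::nat. - int n - 1)" for k :: int
  proof (cases "k \<ge> 0")
    case True then show ?thesis by (metis UnI1 nonneg_int_cases rangeI)
  next
    case False
    then have "k = - int (nat (- k - 1)) - 1" by simp
    then show ?thesis by (metis UnI2 rangeI)
  qed
  then have "range int \<union> range (\<lambda>n::nat. - int n - 1) = UNIV" by auto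
  moreover have "range int \<inter> range (\<lambda>n::nat. - int n - 1) = {}" by auto
  ultimately have "((\<lambda>k::int. r ^ nat \<bar>k\<bar>) has_sum (1 / (1 - r) + r * (1 / (1 - r)))) UNIV"
    using has_sum_Un_disjoint[OF nonneg neg] by simp
  moreover have "1 / (1 - r) + r * (1 / (1 - r)) = (1 + r) / (1 - r)"
    using assms by (simp add: field_simps)
  ultimately show ?thesis by simp
qed

lemma has_sum_product_nonneg:
  fixes f :: "'a \<Rightarrow> real" and g :: "'b \<Rightarrow> real"
  assumes f: "(f has_sum a) A" and g: "(g has_sum b) B"
    and "\<And>x. x \<in> A \<Longrightarrow> 0 \<le> f x" "\<And>y. y \<in> B \<Longrightarrow> 0 \<le> g y"
  shows "((\<lambda>(x, y). f x * g y) has_sum (a * b)) (A \<times> B)"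
proof -
  have rows: "((\<lambda>y. f x * g y) has_sum (f x * b)) B" for x
    using has_sum_cmult_right[OF g] .
  have cols: "((\<lambda>x. f x * b) has_sum (a * b)) A"
    using has_sum_cmult_left[OF f] .
  have "(\<lambda>(x, y). f x * g y) summable_on Sigma A (\<lambda>_. B)"
    by (rule summable_on_SigmaI[OF _ has_sum_imp_summable[OF cols]]) (use rows assms in auto)
  then show ?thesis
    using has_sum_SigmaI[of A "\<lambda>(x, y). f x * g y", OF _ cols] rows by simp
qed

lemma abs_le_square_int: "\<bar>j\<bar> \<le> (j::int)^2"
proof (cases "j = 0")
  case False
  then have "\<bar>j\<bar> * 1 \<le> \<bar>j\<bar> * \<bar>j\<bar>"
    by (intro mult_left_mono) auto
  then show ?thesis by (simp add: power2_eq_square)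
qed simp

definition geom_weight :: "real \<Rightarrow> int \<times> int \<Rightarrow> real" where
  "geom_weight r p = (case p of (k, l) \<Rightarrow> r ^ nat \<bar>k\<bar> * r ^ nat \<bar>l\<bar>)"

lemma has_sum_geom_weight:
  assumes "0 \<le> r" "r < 1"
  shows "(geom_weight r has_sum ((1 + r) / (1 - r))^2) UNIV"
  using has_sum_product_nonneg[OF has_sum_power_abs_int[OF assms] has_sum_power_abs_int[OF assms]] assms
  unfolding geom_weight_def case_prod_unfold by (simp add: power2_eq_square)

lemma geom_weight_nonneg: "0 \<le> r \<Longrightarrow> 0 \<le> geom_weight r p"
  by (simp add: geom_weight_def case_prod_unfold)

lemma exp_neg_sum_sq_le_geom_weight:
  assumes "0 \<le> c"
  shows "exp (- c * (of_int k^2 + of_int l^2)) \<le> geom_weight (exp (- c)) (k, l)"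
proof -
  have sq: "exp (- c * of_int j^2) \<le> exp (- c) ^ nat \<bar>j\<bar>" for j :: int
  proof -
    have "real_of_int \<bar>j\<bar> \<le> of_int (j^2)"
      by (simp only: of_int_le_iff abs_le_square_int)
    then have "c * of_int \<bar>j\<bar> \<le> c * of_int j^2"
      using assms by (simp add: mult_left_mono)
    then show ?thesis by (simp add: exp_of_nat_mult[symmetric] mult.commute)
  qed
  have "exp (- c * (of_int k^2 + of_int l^2)) = exp (- c * of_int k^2) * exp (- c * of_int l^2)"
    by (simp add: algebra_simps flip: exp_add)
  also have "\<dots> \<le> geom_weight (exp (- c)) (k, l)"
    unfolding geom_weight_def prod.case by (intro mult_mono sq) auto
  finally show ?thesis .
qed

lemma has_real_derivative_infsum:
  fixes u u' :: "'a::countable \<Rightarrow> real \<Rightarrow> real"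
  assumes "infinite (UNIV :: 'a set)" and S: "open S" "convex S" and x: "x \<in> S"
    and der: "\<And>p x. x \<in> S \<Longrightarrow> (u p has_real_derivative u' p x) (at x)"
    and bound: "\<And>p x. x \<in> S \<Longrightarrow> \<bar>u p x\<bar> \<le> M p" and bound': "\<And>p x. x \<in> S \<Longrightarrow> \<bar>u' p x\<bar> \<le> M p"
    and M: "M summable_on UNIV"
  shows "((\<lambda>x. \<Sum>\<^sub>\<infinity>p. u p x) has_real_derivative (\<Sum>\<^sub>\<infinity>p. u' p x)) (at x)"
proof -
  \<comment> \<open>Enumerating the index set turns the unordered sum into a series, to which the
    Weierstrass M-test and termwise differentiation of series apply.\<close>
  define g :: "nat \<Rightarrow> 'a" where "g = from_nat_into UNIV"
  have g: "bij g"
    unfolding g_def using assms(1) by (intro bij_betw_from_nat_into) auto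
  have as_series: "(\<lambda>n. h (g n)) sums (\<Sum>\<^sub>\<infinity>p. h p)"
    if "\<And>p. \<bar>h p\<bar> \<le> M p" for h :: "'a \<Rightarrow> real"
  proof -
    have "h summable_on UNIV"
      by (rule abs_summable_summable, rule Infinite_Sum.abs_summable_on_comparison_test'[OF M])
         (use that in simp)
    then have "((\<lambda>n. h (g n)) has_sum (\<Sum>\<^sub>\<infinity>p. h p)) UNIV"
      by (simp add: has_sum_reindex_bij_betw[OF g] has_sum_infsum)
    then show ?thesis by (rule has_sum_imp_sums)
  qed
  have "\<bar>M p\<bar> \<le> M p" for p
    using bound[OF x, of p] by simp
  then have "summable (\<lambda>n. M (g n))"
    by (rule sums_summable[OF as_series])
  then have "uniformly_convergent_on S (\<lambda>n x. \<Sum>i<n. u' (g i) x)"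
    by (rule Weierstrass_m_test'[rotated]) (simp only: real_norm_def bound')
  moreover have "summable (\<lambda>n. u (g n) x)"
    by (rule sums_summable[OF as_series[OF bound[OF x]]])
  ultimately have "((\<lambda>x. \<Sum>n. u (g n) x) has_real_derivative (\<Sum>n. u' (g n) x)) (at x)"
    using S x by (intro has_field_derivative_series'(2)[of S _ _ _ x])
       (simp_all add: interior_open has_field_derivative_at_within der)
  also have "(\<Sum>n. u' (g n) x) = (\<Sum>\<^sub>\<infinity>p. u' p x)"
    using as_series[OF bound'[OF x]] by (rule sums_unique[symmetric])
  finally show ?thesis
  proof (rule has_field_derivative_transform_within_open[OF _ S(1) x])
    show "(\<Sum>n. u (g n) z) = (\<Sum>\<^sub>\<infinity>p. u p z)" if "z \<in> S" for z
      using as_series[OF bound[OF that]] by (rule sums_unique[symmetric])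
  qed
qed

lemma deriv2_infsum:
  fixes u u' u'' :: "'a::countable \<Rightarrow> real \<Rightarrow> real"
  assumes inf: "infinite (UNIV :: 'a set)" and S: "open S" "convex S" and y: "y \<in> S"
    and der: "\<And>p x. x \<in> S \<Longrightarrow> (u p has_real_derivative u' p x) (at x)"
    and der': "\<And>p x. x \<in> S \<Longrightarrow> (u' p has_real_derivative u'' p x) (at x)"
    and bounds: "\<And>p x. x \<in> S \<Longrightarrow> \<bar>u p x\<bar> \<le> M p" "\<And>p x. x \<in> S \<Longrightarrow> \<bar>u' p x\<bar> \<le> M p"
      "\<And>p x. x \<in> S \<Longrightarrow> \<bar>u'' p x\<bar> \<le> M p"
    and M: "M summable_on UNIV"
  shows "deriv (deriv (\<lambda>x. \<Sum>\<^sub>\<infinity>p. u p x)) y = (\<Sum>\<^sub>\<infinity>p. u'' p y)"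
proof -
  have "((\<lambda>x. \<Sum>\<^sub>\<infinity>p. u' p x) has_real_derivative (\<Sum>\<^sub>\<infinity>p. u'' p y)) (at y)"
    by (rule has_real_derivative_infsum[OF inf S y der' bounds(2,3) M])
  then have "(deriv (\<lambda>x. \<Sum>\<^sub>\<infinity>p. u p x) has_real_derivative (\<Sum>\<^sub>\<infinity>p. u'' p y)) (at y)"
  proof (rule has_field_derivative_transform_within_open[OF _ S(1) y])
    show "(\<Sum>\<^sub>\<infinity>p. u' p x) = deriv (\<lambda>x. \<Sum>\<^sub>\<infinity>p. u p x) x" if "x \<in> S" for x
      by (rule DERIV_imp_deriv[symmetric], rule has_real_derivative_infsum[OF inf S that der bounds(1,2) M])
  qed
  then show ?thesis by (rule DERIV_imp_deriv)
qed

definition dphi :: "int \<Rightarrow> int \<Rightarrow> real \<Rightarrow> real" where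
  "dphi k l y = - ((of_int (2*k + l + 1))^2 - (of_int l + 1/2)) / (4*y^2) + (of_int l + 1/2)^2
    - 3 / (64 * y^4)"

definition ddphi :: "int \<Rightarrow> int \<Rightarrow> real \<Rightarrow> real" where
  "ddphi k l y = ((of_int (2*k + l + 1))^2 - (of_int l + 1/2)) / (2*y^3) + 3 / (16 * y^5)"

lemma has_real_derivative_phi:
  assumes "0 < y"
  shows "(phi k l has_real_derivative dphi k l y) (at y)"
  unfolding phi_def[abs_def] dphi_def using assms
  apply (intro derivative_eq_intros)
  apply simp_all
  apply (simp add: field_simps)
  apply (simp add: algebra_simps power2_eq_square power3_eq_cube power4_eq_xxxx; algebra?)
  done

lemma has_real_derivative_dphi:
  assumes "0 < y"
  shows "(dphi k l has_real_derivative ddphi k l y) (at y)"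
  unfolding dphi_def[abs_def] ddphi_def using assms
  apply (intro derivative_eq_intros)
  apply simp_all
  apply (simp add: field_simps)
  apply (simp add: algebra_simps power2_eq_square power3_eq_cube power4_eq_xxxx; algebra?)
  done

definition quad :: "int \<Rightarrow> int \<Rightarrow> int" where
  "quad k l = k^2 + k*l + l^2 + k + l"

lemma quad_eq_sum_squares: "2 * quad k l + 1 = (k + l + 1)^2 + k^2 + l^2"
  by (simp add: quad_def power2_eq_square algebra_simps)

lemma quad_nonneg: "0 \<le> quad k l"
  using quad_eq_sum_squares[of k l] by (smt (verit) zero_le_power2)

lemma sum_squares_le_quad: "k^2 + l^2 \<le> 2 * quad k l + 1"
  unfolding quad_eq_sum_squares by simp

lemma quad_le_sum_squares: "real_of_int (quad k l) \<le> 5/2 * (of_int k^2 + of_int l^2)"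
proof -
  have "2 * quad k l \<le> 5 * k^2 + 5 * l^2"
    using zero_le_power2[of "k - l"] abs_le_square_int[of k] abs_le_square_int[of l]
    unfolding quad_def power2_eq_square by (simp add: algebra_simps)
  then have "real_of_int (2 * quad k l) \<le> of_int (5 * k^2 + 5 * l^2)"
    by (simp only: of_int_le_iff)
  then show ?thesis by simp
qed

lemma quad_pos:
  assumes "(k, l) \<notin> {(0, 0), (-1, 0), (0, -1)}"
  shows "1 \<le> quad k l"
proof (rule ccontr)
  assume "\<not> 1 \<le> quad k l"
  then have "(k + l + 1)^2 + k^2 + l^2 = 1"
    using quad_nonneg[of k l] quad_eq_sum_squares[of k l] by simp
  then have "k\<^sup>2 \<le> 1" "l\<^sup>2 \<le> 1"
    by (smt (verit) zero_le_power2)+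
  then have "\<bar>k\<bar> \<le> 1" "\<bar>l\<bar> \<le> 1"
    by (simp_all only: abs_square_le_1)
  then have "k \<in> {-1, 0, 1}" "l \<in> {-1, 0, 1}"
    by auto
  then show False
    using assms \<open>(k + l + 1)^2 + k^2 + l^2 = 1\<close> by auto
qed

lemma consecutive_prod_nonneg: "0 \<le> of_int l * (of_int l + 1 :: real)"
proof (cases "0 \<le> l")
  case False
  then have "of_int l + 1 \<le> (0::real)" by linarith
  then show ?thesis using False by (simp add: mult_nonpos_nonpos)
qed simp

lemma phi_sub_phi00:
  assumes "0 < y"
  shows "phi k l y - phi 0 0 y
    = ((of_int (2*k + l + 1))^2 - of_int l - 1) / (4*y) + of_int l * (of_int l + 1) * y"
  using assms unfolding phi_def
  by (simp add: field_simps power2_eq_square; simp add: algebra_simps)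

lemma phi00_nonneg: "0 < y \<Longrightarrow> 0 \<le> phi 0 0 y"
  unfolding phi_def by simp

lemma quad_eq: "4 * real_of_int (quad k l) = (of_int (2*k + l + 1))^2 - of_int l - 1 + 3 * (of_int l * (of_int l + 1))"
  by (simp add: quad_def power2_eq_square algebra_simps)

lemma quad_div_le_phi_gap:
  assumes "0 < y" "3 \<le> 4*y^2"
  shows "of_int (quad k l) / y \<le> phi k l y - phi 0 0 y"
proof -
  define L where "L = of_int l * (of_int l + 1 :: real)"
  have "phi k l y - phi 0 0 y - of_int (quad k l) / y = (4*y^2 - 3) * L / (4*y)"
    using assms quad_eq[of k l] unfolding phi_sub_phi00[OF assms(1)] L_def
    by (simp add: field_simps power2_eq_square; simp add: algebra_simps)
  moreover have "0 \<le> (4*y^2 - 3) * L / (4*y)"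
    using assms consecutive_prod_nonneg[of l] unfolding L_def by simp
  ultimately show ?thesis by linarith
qed

lemma half_quad_le_phi_gap:
  assumes y: "4/5 \<le> y" "y \<le> 11/10"
  shows "of_int (quad k l) / 2 - 1/10 \<le> phi k l y - phi 0 0 y"
proof -
  define L where "L = of_int l * (of_int l + 1 :: real)"
  define R where "R = real_of_int (quad k l)"
  define D where "D = phi k l y - phi 0 0 y"
  have y0: "0 < y" using y by simp
  have R0: "0 \<le> R" unfolding R_def using quad_nonneg[of k l] by simp
  have "4*y*D = (of_int (2*k + l + 1))^2 - of_int l - 1 + 4*y^2*L"
    using y0 unfolding D_def phi_sub_phi00[OF y0] L_def by (simp add: field_simps power2_eq_square)
  moreover have "(64/25) * L \<le> (4*y^2) * L"
    using y consecutive_prod_nonneg[of l] power_mono[of "4/5" y 2] unfolding L_def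
    by (intro mult_right_mono) (auto simp: power2_eq_square)
  moreover have "4 * R = (of_int (2*k + l + 1))^2 - of_int l - 1 + 3 * L"
    unfolding R_def L_def by (rule quad_eq)
  moreover have "0 \<le> (of_int l)^2 - of_int l / 4 + (1/64 :: real)"
    using zero_le_power2[of "of_int l - 1/8 :: real"] by (simp add: power2_eq_square algebra_simps)
  moreover have "L = (of_int l)^2 + of_int l"
    unfolding L_def by (simp add: power2_eq_square algebra_simps)
  ultimately have q: "(16/5) * R - 21/100 \<le> 4*y*D"
    using zero_le_power2[of "of_int (2*k + l + 1) :: real"] by linarith
  have "y * (2*R - 2/5) \<le> (16/5) * R - 21/100"
  proof (cases "0 \<le> 2*R - 2/5")
    case True
    then have "y * (2*R - 2/5) \<le> (11/10) * (2*R - 2/5)" using y by (intro mult_right_mono) auto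
    also have "\<dots> \<le> (16/5) * R - 21/100" using R0 by (simp add: algebra_simps)
    finally show ?thesis .
  next
    case False
    then have "y * (2*R - 2/5) \<le> (4/5) * (2*R - 2/5)" using y by (intro mult_right_mono_neg) auto
    also have "\<dots> \<le> (16/5) * R - 21/100" using R0 by (simp add: algebra_simps)
    finally show ?thesis .
  qed
  then have "4*y*(R/2 - 1/10) \<le> 4*y*D" using q by (simp add: algebra_simps)
  then show ?thesis using y0 unfolding D_def R_def by (simp add: mult_le_cancel_left_pos)
qed

lemma phi_ge_sum_squares:
  assumes "4/5 \<le> y" "y \<le> 11/10"
  shows "(of_int k^2 + of_int l^2) / 4 - 7/20 \<le> phi k l y"
proof -
  have "real_of_int (k^2 + l^2) \<le> of_int (2 * quad k l + 1)"
    by (simp only: of_int_le_iff sum_squares_le_quad)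
  then have "of_int k^2 + of_int l^2 \<le> 2 * real_of_int (quad k l) + 1"
    by simp
  moreover have "0 \<le> phi 0 0 y"
    using assms by (intro phi00_nonneg) simp
  ultimately show ?thesis
    using half_quad_le_phi_gap[OF assms, of k l] unfolding add_divide_distrib by linarith
qed

lemma abs_dphi_ddphi_le:
  assumes y: "4/5 \<le> y" "y \<le> 11/10"
  shows "\<bar>dphi k l y\<bar> \<le> 3 + 3 * of_int (quad k l)" "\<bar>ddphi k l y\<bar> \<le> 5 + 5 * of_int (quad k l)"
proof -
  define a :: real where "a = (of_int (2*k + l + 1))^2"
  define m :: real where "m = of_int l + 1/2"
  define w where "w = 1/y"
  have y0: "0 < y" using y by simp
  have w: "0 < w" "w \<le> 5/4" using y y0 unfolding w_def by (simp_all add: field_simps)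
  have q: "0 \<le> w^2" "w^2 \<le> 25/16" "0 \<le> (w^2)^2" "(w^2)^2 \<le> 625/256"
    using power_mono[OF w(2), of 2] power_mono[OF w(2), of 4] w(1)
    by (simp_all add: power_divide flip: power_mult)
  have c: "0 \<le> w^3" "w^3 \<le> 125/64" "0 \<le> w^5" "w^5 \<le> 3125/1024"
    using power_mono[OF w(2), of 3] power_mono[OF w(2), of 5] w(1) by (simp_all add: power_divide)
  have dphi: "dphi k l y = - (a * w^2)/4 + (m * w^2)/4 + m^2 - 3 * (w^2)^2/64"
    unfolding dphi_def a_def m_def w_def using y0 by (simp add: field_simps power2_eq_square power4_eq_xxxx)
  have ddphi: "ddphi k l y = (a * w^3)/2 - (m * w^3)/2 + 3 * w^5/16"
    unfolding ddphi_def a_def m_def w_def using y0 by (simp add: field_simps power2_eq_square power3_eq_cube)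
  have a0: "0 \<le> a" unfolding a_def by simp
  have aw: "0 \<le> a * w^2" "a * w^2 \<le> a * (25/16)" "0 \<le> a * w^3" "a * w^3 \<le> a * (125/64)"
    using mult_left_mono[OF q(2) a0] mult_left_mono[OF c(2) a0] a0 q(1) c(1) by auto
  have mw: "\<bar>m * w^2\<bar> \<le> \<bar>m\<bar> * (25/16)" "\<bar>m * w^3\<bar> \<le> \<bar>m\<bar> * (125/64)"
    using mult_left_mono[OF q(2) abs_ge_zero[of m]] mult_left_mono[OF c(2) abs_ge_zero[of m]] q(1) c(1)
    by (simp_all add: abs_mult)
  have quad: "4 * real_of_int (quad k l) = a + 3*m^2 - m - 5/4"
    unfolding a_def m_def quad_def by (simp add: power2_eq_square algebra_simps)
  have m2: "\<bar>m\<bar> - 1/4 \<le> m^2"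
    using zero_le_power2[of "\<bar>m\<bar> - 1/2"] by (simp add: power2_eq_square algebra_simps)
  have mm: "m \<le> \<bar>m\<bar>" "- m \<le> \<bar>m\<bar>" by auto
  have mw': "m * w^2 \<le> \<bar>m\<bar> * (25/16)" "- (m * w^2) \<le> \<bar>m\<bar> * (25/16)"
    "m * w^3 \<le> \<bar>m\<bar> * (125/64)" "- (m * w^3) \<le> \<bar>m\<bar> * (125/64)"
    using mw by linarith+
  have "dphi k l y \<le> 3 + 3 * of_int (quad k l)" "- dphi k l y \<le> 3 + 3 * of_int (quad k l)"
    unfolding dphi using aw mw' q quad m2 a0 mm by linarith+
  then show "\<bar>dphi k l y\<bar> \<le> 3 + 3 * of_int (quad k l)" by linarith
  have "ddphi k l y \<le> 5 + 5 * of_int (quad k l)" "- ddphi k l y \<le> 5 + 5 * of_int (quad k l)"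
    unfolding ddphi using aw mw' c quad m2 a0 mm by linarith+
  then show "\<bar>ddphi k l y\<bar> \<le> 5 + 5 * of_int (quad k l)" by linarith
qed

lemma abs_dphi_ddphi_le_sum_squares:
  assumes "4/5 \<le> y" "y \<le> 11/10"
  shows "\<bar>dphi k l y\<bar> \<le> 9 * (1 + of_int k^2 + of_int l^2)"
    "\<bar>ddphi k l y\<bar> \<le> 15 * (1 + of_int k^2 + of_int l^2)"
proof -
  have "real_of_int (quad k l) \<le> 5/2 * of_int k^2 + 5/2 * of_int l^2"
    using quad_le_sum_squares[of k l] by (simp add: algebra_simps)
  moreover note abs_dphi_ddphi_le[OF assms, of k l]
  moreover have "0 \<le> real_of_int k^2" "0 \<le> real_of_int l^2" by simp_all
  ultimately show "\<bar>dphi k l y\<bar> \<le> 9 * (1 + of_int k^2 + of_int l^2)"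
    and "\<bar>ddphi k l y\<bar> \<le> 15 * (1 + of_int k^2 + of_int l^2)"
    unfolding distrib_left by linarith+
qed

definition summand :: "real \<Rightarrow> int \<times> int \<Rightarrow> real \<Rightarrow> real" where
  "summand t p y = (case p of (k, l) \<Rightarrow> exp (- t * phi k l y))"

definition summand' :: "real \<Rightarrow> int \<times> int \<Rightarrow> real \<Rightarrow> real" where
  "summand' t p y = (case p of (k, l) \<Rightarrow> - t * dphi k l y * exp (- t * phi k l y))"

definition summand'' :: "real \<Rightarrow> int \<times> int \<Rightarrow> real \<Rightarrow> real" where
  "summand'' t p y = (case p of (k, l) \<Rightarrow> (t^2 * (dphi k l y)^2 - t * ddphi k l y) * exp (- t * phi k l y))"

lemma has_real_derivative_summand:
  assumes "0 < y"
  shows "(summand t p has_real_derivative summand' t p y) (at y)"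
proof -
  obtain k l where p: "p = (k, l)" by (cases p)
  have "((\<lambda>y. exp (- t * phi k l y)) has_real_derivative exp (- t * phi k l y) * (- t * dphi k l y)) (at y)"
    by (intro DERIV_fun_exp DERIV_cmult has_real_derivative_phi assms)
  then show ?thesis unfolding summand_def summand'_def p by (simp add: algebra_simps)
qed

lemma has_real_derivative_summand':
  assumes "0 < y"
  shows "(summand' t p has_real_derivative summand'' t p y) (at y)"
proof -
  obtain k l where p: "p = (k, l)" by (cases p)
  have "((\<lambda>y. exp (- t * phi k l y)) has_real_derivative exp (- t * phi k l y) * (- t * dphi k l y)) (at y)"
    by (intro DERIV_fun_exp DERIV_cmult has_real_derivative_phi assms)
  then have "((\<lambda>y. (- t * dphi k l y) * exp (- t * phi k l y)) has_real_derivative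
      (- t * ddphi k l y) * exp (- t * phi k l y) + (exp (- t * phi k l y) * (- t * dphi k l y)) * (- t * dphi k l y)) (at y)"
    by (rule DERIV_mult[OF DERIV_cmult[OF has_real_derivative_dphi[OF assms]]])
  then show ?thesis unfolding summand'_def summand''_def p by (simp add: algebra_simps power2_eq_square)
qed

lemma summand_coefficients_le:
  fixes k l :: int
  assumes t: "0 < t" and y: "4/5 \<le> y" "y \<le> 11/10"
  defines "Y \<equiv> 1 + of_int k^2 + of_int l^2" and "C \<equiv> 81*t^2 + 24*t + 1"
  shows "1 \<le> C * Y^2" "t * \<bar>dphi k l y\<bar> \<le> C * Y^2"
    "\<bar>t^2 * (dphi k l y)^2 - t * ddphi k l y\<bar> \<le> C * Y^2"
proof -
  have Y1: "1 \<le> Y" unfolding Y_def by simp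
  then have Y: "1 \<le> Y" "Y \<le> Y^2"
    using mult_left_mono[of 1 Y Y] by (simp_all add: power2_eq_square)
  have d1: "\<bar>dphi k l y\<bar> \<le> 9 * Y" and d2: "\<bar>ddphi k l y\<bar> \<le> 15 * Y"
    unfolding Y_def by (fact abs_dphi_ddphi_le_sum_squares[OF y])+
  show "1 \<le> C * Y^2"
    using mult_mono[of 1 C 1 "Y^2"] Y t unfolding C_def by simp
  have "t * \<bar>dphi k l y\<bar> \<le> t * (9 * Y^2)"
    using d1 Y t by (intro mult_left_mono) auto
  also have "\<dots> = (9 * t) * Y^2" by simp
  also have "\<dots> \<le> C * Y^2"
    unfolding C_def using t by (intro mult_right_mono) auto
  finally show "t * \<bar>dphi k l y\<bar> \<le> C * Y^2" .
  have "\<bar>t^2 * (dphi k l y)^2 - t * ddphi k l y\<bar> \<le> \<bar>t^2 * (dphi k l y)^2\<bar> + \<bar>t * ddphi k l y\<bar>"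
    by (rule abs_triangle_ineq4)
  also have "\<dots> = t^2 * \<bar>dphi k l y\<bar>^2 + t * \<bar>ddphi k l y\<bar>"
    using t by (simp add: abs_mult)
  also have "\<dots> \<le> t^2 * (9 * Y)^2 + t * (15 * Y^2)"
    using d1 d2 Y t by (intro add_mono mult_left_mono power_mono) auto
  also have "\<dots> \<le> C * Y^2"
    unfolding C_def using t Y by (simp add: power_mult_distrib algebra_simps)
  finally show "\<bar>t^2 * (dphi k l y)^2 - t * ddphi k l y\<bar> \<le> C * Y^2" .
qed

lemma abs_summand_le:
  fixes k l :: int
  assumes t: "0 < t" and y: "4/5 \<le> y" "y \<le> 11/10"
  defines "B \<equiv> (81*t^2 + 24*t + 1) * (1 + of_int k^2 + of_int l^2)^2 * exp (- t * phi k l y)"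
  shows "\<bar>summand t (k, l) y\<bar> \<le> B" "\<bar>summand' t (k, l) y\<bar> \<le> B" "\<bar>summand'' t (k, l) y\<bar> \<le> B"
proof -
  define e where "e = exp (- t * phi k l y)"
  have "\<bar>summand t (k, l) y\<bar> = 1 * e" "\<bar>summand' t (k, l) y\<bar> = (t * \<bar>dphi k l y\<bar>) * e"
    "\<bar>summand'' t (k, l) y\<bar> = \<bar>t^2 * (dphi k l y)^2 - t * ddphi k l y\<bar> * e"
    unfolding summand_def summand'_def summand''_def e_def using t by (simp_all add: abs_mult)
  moreover have "0 < e" unfolding e_def by simp
  ultimately show "\<bar>summand t (k, l) y\<bar> \<le> B" "\<bar>summand' t (k, l) y\<bar> \<le> B" "\<bar>summand'' t (k, l) y\<bar> \<le> B"
    unfolding B_def e_def[symmetric] using summand_coefficients_le[OF t y, of k l]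
    by (simp_all add: mult_right_mono)
qed

lemma one_plus_le_exp:
  fixes c x :: real
  assumes "0 < c" "0 \<le> x"
  shows "1 + x \<le> (1 + 1/c) * exp (c * x)"
proof -
  have "1 + x \<le> (1 + 1/c) * (1 + c * x)"
    using assms by (simp add: field_simps)
  also have "\<dots> \<le> (1 + 1/c) * exp (c * x)"
    using assms by (intro mult_left_mono exp_ge_add_one_self) auto
  finally show ?thesis .
qed

definition dominant :: "real \<Rightarrow> int \<times> int \<Rightarrow> real" where
  "dominant t p = (81*t^2 + 24*t + 1) * (1 + 16/t)^2 * exp (7*t/20) * geom_weight (exp (- (t/8))) p"

lemma summable_dominant: "0 < t \<Longrightarrow> dominant t summable_on UNIV"
  unfolding dominant_def
  by (intro summable_on_cmult_right has_sum_imp_summable[OF has_sum_geom_weight]) auto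

lemma abs_summand_le_dominant:
  assumes t: "0 < t" and y: "4/5 \<le> y" "y \<le> 11/10"
  shows "\<bar>summand t (k, l) y\<bar> \<le> dominant t (k, l)" "\<bar>summand' t (k, l) y\<bar> \<le> dominant t (k, l)"
    "\<bar>summand'' t (k, l) y\<bar> \<le> dominant t (k, l)"
proof -
  define X :: real where "X = of_int k^2 + of_int l^2"
  have X: "0 \<le> X" unfolding X_def by simp
  have "exp (- t * phi k l y) \<le> exp (7*t/20) * exp (- (t/4) * X)"
  proof -
    have "- t * phi k l y \<le> 7*t/20 + - (t/4) * X"
      using mult_left_mono[OF phi_ge_sum_squares[OF y, of k l], of t] t unfolding X_def
      by (simp add: algebra_simps)
    then show ?thesis by (simp flip: exp_add)
  qed
  moreover have "(1 + X)^2 \<le> (1 + 16/t)^2 * exp (t/8 * X)"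
  proof -
    have "(1 + X)^2 \<le> ((1 + 16/t) * exp (t/16 * X))^2"
      using one_plus_le_exp[of "t/16" X] t X by (intro power_mono) auto
    then show ?thesis by (simp add: power_mult_distrib mult_ac flip: exp_of_nat_mult)
  qed
  ultimately have "(1 + X)^2 * exp (- t * phi k l y)
      \<le> ((1 + 16/t)^2 * exp (t/8 * X)) * (exp (7*t/20) * exp (- (t/4) * X))"
    by (intro mult_mono) auto
  also have "\<dots> = (1 + 16/t)^2 * exp (7*t/20) * exp (- (t/8) * X)"
    by (simp add: mult_ac flip: exp_add)
  also have "\<dots> \<le> (1 + 16/t)^2 * exp (7*t/20) * geom_weight (exp (- (t/8))) (k, l)"
    using exp_neg_sum_sq_le_geom_weight[of "t/8" k l] t unfolding X_def
    by (intro mult_left_mono) auto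
  finally have "(81*t^2 + 24*t + 1) * (1 + X)^2 * exp (- t * phi k l y) \<le> dominant t (k, l)"
    unfolding dominant_def using t by (simp add: mult_left_mono mult.assoc)
  then show "\<bar>summand t (k, l) y\<bar> \<le> dominant t (k, l)" "\<bar>summand' t (k, l) y\<bar> \<le> dominant t (k, l)"
    "\<bar>summand'' t (k, l) y\<bar> \<le> dominant t (k, l)"
    using abs_summand_le[OF t y, of k l] unfolding X_def by (simp_all add: add.assoc)
qed

lemma sqrt3_bounds: "17320/10000 \<le> sqrt 3" "sqrt 3 \<le> 17321/10000"
proof -
  have "sqrt ((17320/10000)^2) \<le> sqrt 3" by (subst real_sqrt_le_iff) (simp add: power2_eq_square)
  then show "17320/10000 \<le> sqrt 3" by simp
  have "sqrt 3 \<le> sqrt ((17321/10000)^2)" by (subst real_sqrt_le_iff) (simp add: power2_eq_square)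
  then show "sqrt 3 \<le> 17321/10000" by simp
qed

lemma summand''_le_quad:
  assumes t: "5 \<le> t" and y: "4/5 \<le> y" "y \<le> 11/10"
  shows "summand'' t (k, l) y \<le> 10 * t^2 * (1 + of_int (quad k l))^2 * exp (- t * phi k l y)"
proof -
  define R where "R = real_of_int (quad k l)"
  have R: "0 \<le> R" unfolding R_def using quad_nonneg[of k l] by simp
  have d1: "\<bar>dphi k l y\<bar> \<le> 3 * (1 + R)" and d2: "\<bar>ddphi k l y\<bar> \<le> 5 * (1 + R)"
    using abs_dphi_ddphi_le[OF y, of k l] unfolding R_def by simp_all
  have "t^2 * (dphi k l y)^2 \<le> t^2 * (3 * (1 + R))^2"
    using power_mono[OF d1, of 2] by (intro mult_left_mono) auto
  moreover have "- (t * ddphi k l y) \<le> t * (5 * (1 + R))"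
    using d2 t mult_left_mono[of "- ddphi k l y" "5 * (1 + R)" t] by simp
  moreover have "t * (5 * (1 + R)) \<le> t^2 * (1 + R)^2"
  proof -
    have "5 * (1 + R) \<le> t * (1 + R)^2"
      using t R mult_mono[of 5 t "1 + R" "(1 + R)^2"] by (simp add: power2_eq_square)
    then show ?thesis using t mult_left_mono[of "5 * (1 + R)" "t * (1 + R)^2" t]
      by (simp add: power2_eq_square mult_ac)
  qed
  moreover have "t^2 * (3 * (1 + R))^2 = 9 * (t^2 * (1 + R)^2)"
    by (simp add: power2_eq_square algebra_simps)
  ultimately have "t^2 * (dphi k l y)^2 - t * ddphi k l y \<le> 10 * t^2 * (1 + R)^2"
    by linarith
  then show ?thesis
    unfolding summand''_def R_def by (simp add: mult_right_mono)
qed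

lemma exp_neg_phi_le:
  assumes t: "0 \<le> t" and y: "sqrt 3 / 2 \<le> y" "y \<le> 10/9"
  shows "exp (- t * phi k l y) \<le> exp (- t * phi 0 0 y) * exp (- (9/10 * t * of_int (quad k l)))"
proof -
  define R where "R = real_of_int (quad k l)"
  have R: "0 \<le> R" unfolding R_def using quad_nonneg[of k l] by simp
  have y0: "0 < y" using y sqrt3_bounds by linarith
  have "3 \<le> 4 * y^2"
    using power_mono[OF y(1), of 2] by (simp add: power_divide)
  then have "R / y \<le> phi k l y - phi 0 0 y"
    unfolding R_def using y0 by (intro quad_div_le_phi_gap) auto
  moreover have "9/10 * R \<le> R / y"
  proof -
    have "R * y \<le> R * (10/9)" using R y by (intro mult_left_mono) auto
    then show ?thesis using y0 by (simp add: field_simps)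
  qed
  ultimately have "9/10 * R \<le> phi k l y - phi 0 0 y"
    by linarith
  then have "t * (9/10 * R) \<le> t * (phi k l y - phi 0 0 y)"
    using t by (rule mult_left_mono)
  then show ?thesis
    unfolding R_def[symmetric] by (simp add: algebra_simps flip: exp_add)
qed

lemma summand''_le_geom_weight:
  assumes t: "40/3 \<le> t" and y: "sqrt 3 / 2 \<le> y" "y \<le> 1003/1000"
    and kl: "(k, l) \<notin> {(0, 0), (-1, 0), (0, -1)}"
  shows "summand'' t (k, l) y
    \<le> 10 * t^2 * exp (- t * phi 0 0 y) * exp (- (15*t/32)) * geom_weight (exp (- (3*t/32))) (k, l)"
proof -
  define R where "R = real_of_int (quad k l)"
  define X :: real where "X = of_int k^2 + of_int l^2"
  have R: "1 \<le> R" unfolding R_def using quad_pos[OF kl] by simp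
  have "real_of_int (k^2 + l^2) \<le> of_int (2 * quad k l + 1)"
    by (simp only: of_int_le_iff sum_squares_le_quad)
  then have XR: "X \<le> 2 * R + 1"
    unfolding X_def R_def by simp
  have y0: "4/5 \<le> y" "y \<le> 11/10" using y sqrt3_bounds by linarith+
  have gap: "exp (- t * phi k l y) \<le> exp (- t * phi 0 0 y) * exp (- (9/10 * t * R))"
    unfolding R_def using t y by (intro exp_neg_phi_le) auto
  have poly: "(1 + R)^2 \<le> exp (2 * R)"
    using power_mono[OF exp_ge_add_one_self[of R], of 2] R by (simp flip: exp_of_nat_mult)
  have "summand'' t (k, l) y \<le> (10 * t^2) * ((1 + R)^2 * exp (- t * phi k l y))"
    using summand''_le_quad[OF _ y0, of t k l] t unfolding R_def by (simp add: mult.assoc)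
  also have "\<dots> \<le> (10 * t^2) * (exp (2 * R) * (exp (- t * phi 0 0 y) * exp (- (9/10 * t * R))))"
    using gap poly by (intro mult_left_mono mult_mono) auto
  also have "\<dots> = 10 * t^2 * exp (- t * phi 0 0 y) * exp (2 * R - 9/10 * t * R)"
    by (simp add: mult_ac flip: exp_add)
  also have "\<dots> \<le> 10 * t^2 * exp (- t * phi 0 0 y) * exp (- (15*t/32) + - (3*t/32) * X)"
  proof -
    have "t * X + 5 * t \<le> 8 * (t * R)"
      using XR R t mult_left_mono[of "X + 5" "8 * R" t] by (simp add: algebra_simps)
    moreover have "40/3 * R \<le> t * R" using t R by (intro mult_right_mono) auto
    ultimately show ?thesis by (intro mult_left_mono) (auto simp: algebra_simps)
  qed
  also have "\<dots> = 10 * t^2 * exp (- t * phi 0 0 y) * exp (- (15*t/32)) * exp (- (3*t/32) * X)"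
    by (simp only: exp_add mult.assoc)
  also have "\<dots> \<le> 10 * t^2 * exp (- t * phi 0 0 y) * exp (- (15*t/32)) * geom_weight (exp (- (3*t/32))) (k, l)"
    using exp_neg_sum_sq_le_geom_weight[of "3*t/32" k l] t unfolding X_def
    by (intro mult_left_mono) auto
  finally show ?thesis .
qed

lemma summand''_minimal:
  assumes "0 < y"
  shows "summand'' t (-1, 0) y = summand'' t (0, 0) y" "summand'' t (0, -1) y = summand'' t (0, 0) y"
proof -
  have "phi 0 (-1) y = phi 0 0 y"
    using assms by (simp add: phi_def field_simps power2_eq_square; simp add: algebra_simps)
  then show "summand'' t (-1, 0) y = summand'' t (0, 0) y" "summand'' t (0, -1) y = summand'' t (0, 0) y"
    by (simp_all add: summand''_def phi_def dphi_def ddphi_def)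
qed

lemma t_dphi00_sq_le:
  assumes y: "sqrt 3 / 2 \<le> y" and t: "0 \<le> t" "t * (y - sqrt 3 / 2)^2 \<le> pi / 9"
  shows "t * (dphi 0 0 y)^2 \<le> 21/100"
proof -
  have "0 < sqrt 3 / 2" by simp
  then have y0: "0 < y" using y by linarith
  have y2: "3/4 \<le> y^2"
    using power_mono[OF y, of 2] by (simp add: power_divide)
  define g where "g = (2*y + sqrt 3) * (4*y^2 + 1) / (32 * y^4)"
  have "(y - sqrt 3 / 2) * (2*y + sqrt 3) = 2*y^2 - 3/2"
    by (simp add: algebra_simps power2_eq_square)
  then have dphi: "dphi 0 0 y = (y - sqrt 3 / 2) * g"
    unfolding g_def dphi_def using y0
    by (simp add: field_simps power2_eq_square power4_eq_xxxx; simp add: algebra_simps)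
  have "(2*y + sqrt 3) * (4*y^2 + 1) \<le> (4*y) * (16*y^2/3)"
    using y y2 y0 by (intro mult_mono) auto
  then have "g \<le> (4*y) * (16*y^2/3) / (32 * y^4)"
    unfolding g_def by (rule divide_right_mono) (use y0 in simp)
  also have "\<dots> = 2 / (3*y)"
    using y0 by (simp add: field_simps power2_eq_square power4_eq_xxxx)
  finally have "g^2 \<le> (2 / (3*y))^2"
    using y0 by (intro power_mono) (auto simp: g_def)
  also have "\<dots> \<le> 16/27"
    using y2 y0 by (simp add: power_divide field_simps)
  finally have "g^2 \<le> 16/27" .
  then have "t * (dphi 0 0 y)^2 \<le> (pi / 9) * (16/27)"
    unfolding dphi power_mult_distrib mult.assoc[symmetric] using t by (intro mult_mono) auto
  also have "\<dots> \<le> 21/100"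
    using pi_approx(2) by simp
  finally show ?thesis .
qed

lemma ddphi00_ge:
  assumes "0 < y" "y \<le> 1003/1000"
  shows "42/100 \<le> ddphi 0 0 y"
proof -
  define w where "w = 1/y"
  have w: "1000/1003 \<le> w" unfolding w_def using assms by (simp add: field_simps)
  have "ddphi 0 0 y = w^3/4 + 3 * w^5/16"
    unfolding ddphi_def w_def using assms by (simp add: field_simps power_one_over)
  moreover have "(42/100::real) \<le> (1000/1003)^3/4 + 3 * (1000/1003)^5/16"
    by (simp add: power_divide)
  ultimately show ?thesis
    using power_mono[OF w, of 3] power_mono[OF w, of 5] by linarith
qed

lemma t_exp_neg_le:
  assumes "6 * pi \<le> t"
  shows "t * exp (- (15*t/32)) \<le> 1/50"
proof -
  have "314/100 \<le> pi" using pi_approx(1) by simp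
  then have t: "1884/100 \<le> t" using assms by linarith
  have "t/4 \<le> exp (t/8)"
    using exp_lower_Taylor_quadratic[of "t/8"] zero_le_power2[of "t/8 - 1"] t
    by (simp add: power2_eq_square algebra_simps)
  moreover have "200 \<le> exp (11*t/32)"
  proof -
    have "1619/1000 \<le> 11*t/128" using t by simp
    then have "39/10 \<le> exp (11*t/128)"
      using exp_lower_Taylor_quadratic[of "11*t/128"] power_mono[of "1619/1000" "11*t/128" 2]
      by (simp add: power2_eq_square)
    then have "(39/10)^4 \<le> exp (11*t/128) ^ 4" by (intro power_mono) auto
    then show ?thesis by (simp add: power_divide flip: exp_of_nat_mult)
  qed
  ultimately have "(t/4) * 200 \<le> exp (t/8) * exp (11*t/32)"
    using t by (intro mult_mono) auto
  then have "50 * t \<le> exp (15*t/32)"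
    by (simp flip: exp_add)
  then show ?thesis
    by (simp add: exp_minus field_simps)
qed

lemma geom_ratio_sq_le:
  assumes "6 * pi \<le> t"
  shows "((1 + exp (- (3*t/32))) / (1 - exp (- (3*t/32))))^2 \<le> 25/9"
proof -
  define r where "r = exp (- (3*t/32))"
  have "314/100 \<le> pi" using pi_approx(1) by simp
  then have "1766/1000 \<le> 3*t/32" using assms by linarith
  then have "4 \<le> exp (3*t/32)"
    using exp_lower_Taylor_quadratic[of "3*t/32"] power_mono[of "1766/1000" "3*t/32" 2]
    by (simp add: power2_eq_square)
  then have r: "0 \<le> r" "r \<le> 1/4"
    unfolding r_def by (simp_all add: exp_minus field_simps)
  then have "(1 + r) / (1 - r) \<le> 5/3" by (simp add: divide_le_eq)
  then have "((1 + r) / (1 - r))^2 \<le> (5/3)^2"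
    using r by (intro power_mono) auto
  then show ?thesis unfolding r_def by (simp add: power_divide)
qed

lemma summable_on_summand'':
  assumes "0 < t" "4/5 \<le> y" "y \<le> 11/10"
  shows "(\<lambda>p. summand'' t p y) summable_on A"
proof -
  have "norm (summand'' t p y) \<le> dominant t p" for p
    using abs_summand_le_dominant(3)[OF assms, of "fst p" "snd p"] by simp
  then have "(\<lambda>p. norm (summand'' t p y)) summable_on UNIV"
    by (rule Infinite_Sum.abs_summable_on_comparison_test'[OF summable_dominant[OF assms(1)]])
  then have "(\<lambda>p. summand'' t p y) summable_on UNIV"
    by (rule abs_summable_summable)
  then show ?thesis
    by (rule summable_on_subset_banach) simp
qed

lemma infsum_summand''_le:
  assumes t: "40/3 \<le> t" and y: "sqrt 3 / 2 \<le> y" "y \<le> 1003/1000"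
  defines "\<rho> \<equiv> exp (- (3*t/32))"
  shows "(\<Sum>\<^sub>\<infinity>p. summand'' t p y)
    \<le> 3 * summand'' t (0, 0) y
      + 10 * t^2 * exp (- t * phi 0 0 y) * exp (- (15*t/32)) * ((1 + \<rho>) / (1 - \<rho>))^2"
proof -
  define Min :: "(int \<times> int) set" where "Min = {(0, 0), (-1, 0), (0, -1)}"
  define B where "B = 10 * t^2 * exp (- t * phi 0 0 y) * exp (- (15*t/32))"
  define w where "w = (\<lambda>p. B * geom_weight \<rho> p)"
  have t0: "0 < t" using t by simp
  have y0: "0 < y" "4/5 \<le> y" "y \<le> 11/10" using y sqrt3_bounds by linarith+
  have summable: "(\<lambda>p. summand'' t p y) summable_on A" for A
    using t0 y0(2,3) by (rule summable_on_summand'')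
  have weight: "(w has_sum (B * ((1 + \<rho>) / (1 - \<rho>))^2)) UNIV"
    unfolding w_def \<rho>_def using t0 by (intro has_sum_cmult_right has_sum_geom_weight) auto
  then have summable_w: "w summable_on A" for A
    by (intro summable_on_subset_banach[OF has_sum_imp_summable]) auto
  have w: "0 \<le> w p" for p
    unfolding w_def B_def \<rho>_def by (simp add: geom_weight_nonneg)
  have "(\<Sum>\<^sub>\<infinity>p. summand'' t p y) = (\<Sum>\<^sub>\<infinity>p\<in>Min. summand'' t p y) + (\<Sum>\<^sub>\<infinity>p\<in>-Min. summand'' t p y)"
    using infsum_Un_disjoint[OF summable summable, of Min "-Min"] by simp
  also have "(\<Sum>\<^sub>\<infinity>p\<in>Min. summand'' t p y) = 3 * summand'' t (0, 0) y"
    unfolding Min_def using summand''_minimal[OF y0(1), of t] by simp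
  also have "(\<Sum>\<^sub>\<infinity>p\<in>-Min. summand'' t p y) \<le> (\<Sum>\<^sub>\<infinity>p. w p)"
  proof (rule infsum_mono_neutral[OF summable summable_w])
    show "summand'' t p y \<le> w p" if "p \<in> - Min \<inter> UNIV" for p
    proof -
      obtain k l where p: "p = (k, l)" by (cases p)
      then have "(k, l) \<notin> {(0, 0), (-1, 0), (0, -1)}" using that unfolding Min_def by simp
      from summand''_le_geom_weight[OF t y this] show ?thesis unfolding p w_def B_def \<rho>_def .
    qed
  qed (use w in auto)
  also have "(\<Sum>\<^sub>\<infinity>p. w p) = B * ((1 + \<rho>) / (1 - \<rho>))^2"
    using weight by (rule infsumI)
  finally show ?thesis
    unfolding B_def by simp
qed

lemma infsum_summand''_neg:
  assumes t: "6 * pi \<le> t" and y: "sqrt 3 / 2 \<le> y" "y \<le> 1003/1000"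
    and close: "t * (y - sqrt 3 / 2)^2 \<le> pi / 9"
  shows "(\<Sum>\<^sub>\<infinity>p. summand'' t p y) < 0"
proof -
  define E where "E = exp (- t * phi 0 0 y)"
  define G where "G = ((1 + exp (- (3*t/32))) / (1 - exp (- (3*t/32))))^2"
  define c where "c = t * exp (- (15*t/32))"
  have "314/100 \<le> pi" using pi_approx(1) by simp
  then have t0: "40/3 \<le> t" using t by linarith
  have y0: "0 < y" using y sqrt3_bounds by linarith
  have "c * G \<le> (1/50) * (25/9)"
    using t_exp_neg_le[OF t] geom_ratio_sq_le[OF t] t0 unfolding c_def G_def
    by (intro mult_mono) auto
  then have "3 * (t * (dphi 0 0 y)^2) - 3 * ddphi 0 0 y + 10 * (c * G) < 0"
    using t_dphi00_sq_le[OF y(1) _ close] ddphi00_ge[OF y0 y(2)] t0 by simp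
  then have "(t * E) * (3 * (t * (dphi 0 0 y)^2) - 3 * ddphi 0 0 y + 10 * (c * G)) < 0"
    using t0 unfolding E_def by (simp add: mult_pos_neg)
  moreover have "3 * summand'' t (0, 0) y + 10 * t^2 * E * exp (- (15*t/32)) * G
      = (t * E) * (3 * (t * (dphi 0 0 y)^2) - 3 * ddphi 0 0 y + 10 * (c * G))"
    unfolding summand''_def E_def c_def by (simp add: algebra_simps power2_eq_square)
  ultimately show ?thesis
    using infsum_summand''_le[OF t0 y] unfolding E_def G_def by linarith
qed

lemma window_bounds:
  assumes "6 \<le> \<alpha>" "sqrt 3 / 2 \<le> y" "y \<le> sqrt 3 / 2 + 1 / (3 * sqrt \<alpha>)"
  shows "y \<le> 1003/1000" "pi * \<alpha> * (y - sqrt 3 / 2)^2 \<le> pi / 9"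
proof -
  have "sqrt ((2449/1000)^2) \<le> sqrt \<alpha>"
    using assms(1) by (subst real_sqrt_le_iff) (simp add: power2_eq_square)
  then have "1 / (3 * sqrt \<alpha>) \<le> 1 / (3 * (2449/1000))"
    using assms(1) by (intro divide_left_mono) auto
  then show "y \<le> 1003/1000"
    using assms(3) sqrt3_bounds by simp
  have "(y - sqrt 3 / 2)^2 \<le> (1 / (3 * sqrt \<alpha>))^2"
    using assms(2,3) by (intro power_mono) auto
  also have "\<dots> = 1 / (9 * \<alpha>)"
    using assms(1) by (simp add: power_divide power_mult_distrib)
  finally have "\<alpha> * (y - sqrt 3 / 2)^2 \<le> 1/9"
    using assms(1) mult_left_mono[of _ _ \<alpha>] by fastforce
  then show "pi * \<alpha> * (y - sqrt 3 / 2)^2 \<le> pi / 9"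
    using mult_left_mono[of _ _ pi] by (fastforce simp: mult.assoc)
qed

theorem mainTheorem16:
  fixes \<alpha> y :: real
  assumes "\<alpha> \<ge> 6"
    and "sqrt 3 / 2 \<le> y" and "y \<le> sqrt 3 / 2 + 1 / (3 * sqrt \<alpha>)"
  shows "deriv (deriv (f_alpha \<alpha>)) y < 0"
proof -
  define t where "t = pi * \<alpha>"
  define S :: "real set" where "S = {4/5<..<11/10}"
  have t: "6 * pi \<le> t" "0 < t" unfolding t_def using assms(1) by simp_all
  note window = window_bounds[OF assms, folded t_def]
  have y: "y \<in> S" unfolding S_def using assms(2) window(1) sqrt3_bounds by auto
  have S: "x \<in> S \<Longrightarrow> 0 < x \<and> 4/5 \<le> x \<and> x \<le> 11/10" for x unfolding S_def by auto
  have "f_alpha \<alpha> = (\<lambda>y. \<Sum>\<^sub>\<infinity>p. summand t p y)"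
    by (simp add: fun_eq_iff f_alpha_def summand_def t_def case_prod_unfold)
  moreover have "deriv (deriv (\<lambda>y. \<Sum>\<^sub>\<infinity>p. summand t p y)) y = (\<Sum>\<^sub>\<infinity>p. summand'' t p y)"
  proof (rule deriv2_infsum[where u' = "summand' t" and u'' = "summand'' t" and M = "dominant t"])
    show "infinite (UNIV :: (int \<times> int) set)" by (simp add: finite_prod infinite_UNIV_int)
    show "open S" "convex S" unfolding S_def by auto
  qed (use y t S has_real_derivative_summand has_real_derivative_summand'
        abs_summand_le_dominant summable_dominant in force)+
  moreover have "(\<Sum>\<^sub>\<infinity>p. summand'' t p y) < 0"
    using infsum_summand''_neg[OF t(1) assms(2) window] .
  ultimately show ?thesis by simp
qed

end
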